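(* Let $h$ be a probability density on $\mathbb{R}$ that is $(\alpha,\beta)$-admissible for functions $\alpha,\beta:(0,\infty)\to(0,\infty)$ and satisfies $h(z)>h(z')>0$ for all $0\le z<z'$. Define the one-sided density $g(z)=0$ for $z<0$ and $g(z)=h(z)/\int_{w\ge0}h(w)\,dw$ for $z\ge0$. Let $\epsilon>0$, $k>0$, $l>0$, $\alpha'=\alpha(k\epsilon)$, $\beta'=\beta(l\epsilon)$. Let $u:D^n\times\mathcal{R}\to\mathbb{R}$ be a score function with finite candidate set $\mathcal{R}$, and let $S:D^n\times\mathcal{R}\to(0,\infty)$ be a $\beta'$-smooth upper bound on the local sensitivity of $u$. Consider the mechanism with $Z_r$ ($r\in\mathcal{R}$) i.i.d. with density $g$: $$M_{SPS}(x)=\operatorname{argmax}_{r\in\mathcal{R}}\Big\{u(x,r)+\frac{\max_{r'\in\mathcal{R}}S(x,r')}{\alpha'}\cdot Z_r\Big\}$$ (returning the first maximizer in a fixed ordering of $\mathcal{R}$ if there are several). Then $M_{SPS}$ is $\big((k+\tfrac{|\mathcal{R}|-1}{2}\, l)\,\epsilon\big)$-differentially private.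
   Context: $D^n$ denotes the set of datasets consisting of $n$ elements; Hamming distance $d(x,y)=|\{i:x_i\neq y_i\}|$; $x,y$ neighboring if $d(x,y)=1$. A randomized mechanism $M$ is $\epsilon$-differentially private if for all neighboring $x,y$ and all sets $\mathcal{S}$ of outputs, $\Pr[M(x)\in\mathcal{S}]\le e^{\epsilon}\Pr[M(y)\in\mathcal{S}]$. For a score function $u:D^n\times\mathcal{R}\to\mathbb{R}$, the local sensitivity at $x$ for $r$ is $LS_{u,\mathcal{R}}(x,r)=\max_{y:d(x,y)=1}|u(x,r)-u(y,r)|$. For $\beta>0$, $S:D^n\times\mathcal{R}\to\mathbb{R}$ is a $\beta$-smooth upper bound on the local sensitivity of $u$ if for every $r\in\mathcal{R}$: $S(x,r)\ge LS_{u,\mathcal{R}}(x,r)$ for all $x$, and $S(x,r)\le e^{\beta}S(y,r)$ for all $x,y$ with $d(x,y)=1$. Given functions $\alpha,\beta:(0,\infty)\to(0,\infty)$, a density $h$ on $\mathbb{R}$ is $(\alpha,\beta)$-admissible if for every $\epsilon>0$, every $\Delta\in\mathbb{R}$ with $|\Delta|\le\alpha(\epsilon)$, every $\lambda$ with $|\lambda|\le\beta(\epsilon)$ and every measurable $\mathcal{S}\subseteq\mathbb{R}$, with $Z\sim h$: $\Pr[Z\in\mathcal{S}]\le e^{\epsilon/2}\Pr[Z\in\mathcal{S}+\Delta]$ and $\Pr[Z\in\mathcal{S}]\le e^{\epsilon/2}\Pr[Z\in e^{\lambda}\mathcal{S}]$. *)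

theory Defs
  imports "HOL-Probability.Probability"
begin

text \<open>Datasets in D^n are lists of length n over an element type 'd.\<close>

definition hamming :: "'d list \<Rightarrow> 'd list \<Rightarrow> nat" where
  "hamming x y = card {i. i < length x \<and> x ! i \<noteq> y ! i}"

definition neighboring :: "nat \<Rightarrow> 'd list \<Rightarrow> 'd list \<Rightarrow> bool" where
  "neighboring n x y \<longleftrightarrow> length x = n \<and> length y = n \<and> hamming x y = 1"

definition differentially_private :: "nat \<Rightarrow> ('d list \<Rightarrow> 'o measure) \<Rightarrow> real \<Rightarrow> bool" where
  "differentially_private n M eps \<longleftrightarrow>
     (\<forall>x y. neighboring n x y \<longrightarrow>
        (\<forall>T \<in> sets (M x). measure (M x) T \<le> exp eps * measure (M y) T))"

text \<open>S is a beta-smooth upper bound on the local sensitivity of u (on D^n, candidates R).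
  The condition S(x,r) >= LS(x,r) = max over neighbours y of |u(x,r) - u(y,r)|
  is written out pointwise.\<close>
definition smooth_upper_bound ::
  "nat \<Rightarrow> 'r set \<Rightarrow> ('d list \<Rightarrow> 'r \<Rightarrow> real) \<Rightarrow> ('d list \<Rightarrow> 'r \<Rightarrow> real) \<Rightarrow> real \<Rightarrow> bool" where
  "smooth_upper_bound n R u S \<beta> \<longleftrightarrow>
     (\<forall>r\<in>R. (\<forall>x y. neighboring n x y \<longrightarrow> \<bar>u x r - u y r\<bar> \<le> S x r) \<and>
             (\<forall>x y. neighboring n x y \<longrightarrow> S x r \<le> exp \<beta> * S y r))"

definition admissible :: "(real \<Rightarrow> real) \<Rightarrow> (real \<Rightarrow> real) \<Rightarrow> (real \<Rightarrow> real) \<Rightarrow> bool" where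
  "admissible \<alpha> \<beta> h \<longleftrightarrow>
     (\<forall>\<epsilon>>0. \<forall>\<Delta> lam. \<forall>A \<in> sets borel.
        \<bar>\<Delta>\<bar> \<le> \<alpha> \<epsilon> \<longrightarrow> \<bar>lam\<bar> \<le> \<beta> \<epsilon> \<longrightarrow>
        measure (density lborel h) A \<le> exp (\<epsilon>/2) * measure (density lborel h) ((\<lambda>s. s + \<Delta>) ` A) \<and>
        measure (density lborel h) A \<le> exp (\<epsilon>/2) * measure (density lborel h) ((\<lambda>s. exp lam * s) ` A))"

definition prob_density :: "(real \<Rightarrow> real) \<Rightarrow> bool" where
  "prob_density h \<longleftrightarrow> h \<in> borel_measurable borel \<and> (\<forall>z. 0 \<le> h z) \<and>
     (\<integral>\<^sup>+ z. ennreal (h z) \<partial>lborel) = 1"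

definition one_sided :: "(real \<Rightarrow> real) \<Rightarrow> real \<Rightarrow> real" where
  "one_sided h z = (if z < 0 then 0 else h z / (\<integral>w. indicator {0..} w * h w \<partial>lborel))"

definition argmax_first :: "'r list \<Rightarrow> ('r \<Rightarrow> real) \<Rightarrow> 'r" where
  "argmax_first rs f = hd (filter (\<lambda>r. f r = Max (f ` set rs)) rs)"

definition sps_choice ::
  "'r list \<Rightarrow> ('d list \<Rightarrow> 'r \<Rightarrow> real) \<Rightarrow> ('d list \<Rightarrow> 'r \<Rightarrow> real) \<Rightarrow> real \<Rightarrow> 'd list \<Rightarrow> ('r \<Rightarrow> real) \<Rightarrow> 'r" where
  "sps_choice rs u S a x z =
     argmax_first rs (\<lambda>r. u x r + (Max ((S x) ` set rs) / a) * z r)"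

definition sps_mechanism ::
  "'r list \<Rightarrow> (real \<Rightarrow> real) \<Rightarrow> ('d list \<Rightarrow> 'r \<Rightarrow> real) \<Rightarrow> ('d list \<Rightarrow> 'r \<Rightarrow> real) \<Rightarrow> real \<Rightarrow> 'd list \<Rightarrow> 'r measure" where
  "sps_mechanism rs g u S a x =
     distr (PiM (set rs) (\<lambda>_. density lborel g)) (count_space UNIV) (sps_choice rs u S a x)"

end

theory Submission
  imports Defs
begin

text \<open>
  Fix neighbouring datasets x, y and an output r, and let S_x, S_y be the largest smooth
  sensitivities at x and y. Let \<Psi> act on noise vectors coordinatewise: it lowers the coordinate
  of r by 2\<alpha>', which absorbs the change of at most 2 min(S_x, S_y) in the score gaps between r
  and its competitors, and it rescales by S_y/S_x, which matches the two noise scales -- on every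
  other coordinate if S_x \<le> S_y, and on the coordinate of r otherwise. If r wins on x with noise
  \<Psi>(z), then r wins on y with noise z. Admissibility bounds Pr[Z \<in> B] by
  c Pr[\<psi>(Z) \<in> B] for each coordinate map \<psi>, with c = e^{k\<epsilon>} for the double shift and
  c = e^{l\<epsilon>/2} for a rescaling; the one-sided density inherits these bounds from h because
  \<psi> maps negative numbers to negative numbers. Multiplying over the independent coordinates gives
  at most e^{k\<epsilon> + (|R|-1) l\<epsilon>/2}.
\<close>

lemma nn_integral_le_scaled_vimage:
  assumes \<psi>: "\<psi> \<in> M \<rightarrow>\<^sub>M M"
    and le: "\<And>B. B \<in> sets M \<Longrightarrow> emeasure M B \<le> ennreal c * emeasure M (\<psi> -` B \<inter> space M)"
    and f: "f \<in> borel_measurable M"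
  shows "(\<integral>\<^sup>+x. f x \<partial>M) \<le> ennreal c * (\<integral>\<^sup>+x. f (\<psi> x) \<partial>M)"
proof -
  have "emeasure M B \<le> ennreal c * emeasure (distr M M \<psi>) B" for B
    by (cases "B \<in> sets M") (simp_all add: emeasure_distr[OF \<psi>] emeasure_notin_sets le)
  then have "M \<le> scale_measure (ennreal c) (distr M M \<psi>)"
    by (simp add: le_measure_iff space_scale_measure le_fun_def)
  then have "(\<integral>\<^sup>+x. f x \<partial>M) \<le> (\<integral>\<^sup>+x. f x \<partial>scale_measure (ennreal c) (distr M M \<psi>))"
    by (intro nn_integral_mono_measure) auto
  also have "\<dots> = ennreal c * (\<integral>\<^sup>+x. f x \<partial>distr M M \<psi>)"
    using f by (intro nn_integral_scale_measure) auto
  also have "(\<integral>\<^sup>+x. f x \<partial>distr M M \<psi>) = (\<integral>\<^sup>+x. f (\<psi> x) \<partial>M)"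
    using f by (intro nn_integral_distr[OF \<psi>]) auto
  finally show ?thesis .
qed

lemma nn_integral_PiM_le_scaled_vimage:
  fixes M :: "'a measure" and c :: "'i \<Rightarrow> real"
  assumes M: "sigma_finite_measure M" and I: "finite I"
    and \<psi>: "\<And>i. i \<in> I \<Longrightarrow> \<psi> i \<in> M \<rightarrow>\<^sub>M M"
    and c: "\<And>i. i \<in> I \<Longrightarrow> 0 \<le> c i"
    and le: "\<And>i B. i \<in> I \<Longrightarrow> B \<in> sets M \<Longrightarrow>
               emeasure M B \<le> ennreal (c i) * emeasure M (\<psi> i -` B \<inter> space M)"
    and f: "f \<in> borel_measurable (PiM I (\<lambda>_. M))"
  shows "(\<integral>\<^sup>+z. f z \<partial>PiM I (\<lambda>_. M))
           \<le> ennreal (\<Prod>i\<in>I. c i) * (\<integral>\<^sup>+z. f (\<lambda>j\<in>I. \<psi> j (z j)) \<partial>PiM I (\<lambda>_. M))"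
proof -
  interpret product_sigma_finite "\<lambda>_. M"
    using M by (simp add: product_sigma_finite_def)
  have "(\<integral>\<^sup>+z. f z \<partial>PiM J (\<lambda>_. M))
          \<le> ennreal (\<Prod>i\<in>J. c i) * (\<integral>\<^sup>+z. f (\<lambda>j\<in>J. \<psi> j (z j)) \<partial>PiM J (\<lambda>_. M))"
    if "J \<subseteq> I" "f \<in> borel_measurable (PiM J (\<lambda>_. M))" for J f
    using finite_subset[OF that(1) I] that
  proof (induction J arbitrary: f rule: finite_induct)
    case empty
    then show ?case
      by (simp add: PiM_empty restrict_def nn_integral_count_space_finite)
  next
    case (insert i J)
    have i: "i \<in> I" and J: "J \<subseteq> I" using insert.prems(1) by auto
    note [measurable] = insert.prems(2) \<psi>[OF i]
    define F where "F x = ennreal (c i) * (\<integral>\<^sup>+y. f (x(i := \<psi> i y)) \<partial>M)" for x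
    have "F \<in> borel_measurable (PiM J (\<lambda>_. M))"
      unfolding F_def by measurable
    define \<Psi> where "\<Psi> z = (\<lambda>j\<in>insert i J. \<psi> j (z j))" for z
    have [measurable]: "\<Psi> \<in> PiM (insert i J) (\<lambda>_. M) \<rightarrow>\<^sub>M PiM (insert i J) (\<lambda>_. M)"
      unfolding \<Psi>_def using insert.prems(1)
      by (intro measurable_restrict measurable_compose[OF measurable_component_singleton[where M="\<lambda>_. M"] \<psi>]) auto
    have \<Psi>_update: "(\<lambda>j\<in>J. \<psi> j (x j))(i := \<psi> i y) = \<Psi> (x(i := y))" for x y
      using insert.hyps(2) by (auto simp: \<Psi>_def fun_eq_iff)
    have "(\<integral>\<^sup>+z. f z \<partial>PiM (insert i J) (\<lambda>_. M)) = (\<integral>\<^sup>+x. \<integral>\<^sup>+y. f (x(i := y)) \<partial>M \<partial>PiM J (\<lambda>_. M))"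
      using insert.hyps by (intro product_nn_integral_insert) auto
    also have "\<dots> \<le> (\<integral>\<^sup>+x. F x \<partial>PiM J (\<lambda>_. M))"
      unfolding F_def using insert.hyps i
      by (intro nn_integral_mono nn_integral_le_scaled_vimage[OF \<psi>[OF i]] le) auto
    also have "\<dots> \<le> ennreal (\<Prod>j\<in>J. c j) * (\<integral>\<^sup>+x. F (\<lambda>j\<in>J. \<psi> j (x j)) \<partial>PiM J (\<lambda>_. M))"
      using J \<open>F \<in> borel_measurable (PiM J (\<lambda>_. M))\<close> by (intro insert.IH) auto
    also have "(\<integral>\<^sup>+x. F (\<lambda>j\<in>J. \<psi> j (x j)) \<partial>PiM J (\<lambda>_. M))
        = ennreal (c i) * (\<integral>\<^sup>+x. \<integral>\<^sup>+y. f (\<Psi> (x(i := y))) \<partial>M \<partial>PiM J (\<lambda>_. M))"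
      unfolding F_def \<Psi>_update by (rule nn_integral_cmult) measurable
    also have "(\<integral>\<^sup>+x. \<integral>\<^sup>+y. f (\<Psi> (x(i := y))) \<partial>M \<partial>PiM J (\<lambda>_. M))
        = (\<integral>\<^sup>+z. f (\<Psi> z) \<partial>PiM (insert i J) (\<lambda>_. M))"
      using insert.hyps by (intro product_nn_integral_insert[symmetric]) auto
    finally have "(\<integral>\<^sup>+z. f z \<partial>PiM (insert i J) (\<lambda>_. M))
        \<le> ennreal (\<Prod>j\<in>J. c j) * (ennreal (c i) * (\<integral>\<^sup>+z. f (\<Psi> z) \<partial>PiM (insert i J) (\<lambda>_. M)))" .
    moreover have "ennreal (\<Prod>j\<in>insert i J. c j) = ennreal (\<Prod>j\<in>J. c j) * ennreal (c i)"
      using insert.hyps c J i by (simp add: ennreal_mult prod_nonneg mult.commute subset_iff)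
    ultimately show ?case by (simp only: \<Psi>_def mult.assoc)
  qed
  then show ?thesis using f by blast
qed

lemma emeasure_PiM_le_scaled_vimage:
  fixes M :: "'a measure" and c :: "'i \<Rightarrow> real"
  assumes M: "sigma_finite_measure M" and I: "finite I"
    and \<psi>: "\<And>i. i \<in> I \<Longrightarrow> \<psi> i \<in> M \<rightarrow>\<^sub>M M"
    and c: "\<And>i. i \<in> I \<Longrightarrow> 0 \<le> c i"
    and le: "\<And>i B. i \<in> I \<Longrightarrow> B \<in> sets M \<Longrightarrow>
               emeasure M B \<le> ennreal (c i) * emeasure M (\<psi> i -` B \<inter> space M)"
    and A: "A \<in> sets (PiM I (\<lambda>_. M))"
  shows "emeasure (PiM I (\<lambda>_. M)) A
           \<le> ennreal (\<Prod>i\<in>I. c i) * emeasure (PiM I (\<lambda>_. M))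
                 ((\<lambda>z. \<lambda>j\<in>I. \<psi> j (z j)) -` A \<inter> space (PiM I (\<lambda>_. M)))"
proof -
  let ?P = "PiM I (\<lambda>_. M)" and ?\<Psi> = "\<lambda>z. \<lambda>j\<in>I. \<psi> j (z j)"
  have \<Psi>: "?\<Psi> \<in> ?P \<rightarrow>\<^sub>M ?P"
    by (intro measurable_restrict measurable_compose[OF measurable_component_singleton[where M="\<lambda>_. M"] \<psi>])
  have "emeasure ?P A = (\<integral>\<^sup>+z. indicator A z \<partial>?P)"
    using A by simp
  also have "\<dots> \<le> ennreal (\<Prod>i\<in>I. c i) * (\<integral>\<^sup>+z. indicator A (?\<Psi> z) \<partial>?P)"
    using A by (intro nn_integral_PiM_le_scaled_vimage[OF M I \<psi> c le]) auto
  also have "(\<integral>\<^sup>+z. indicator A (?\<Psi> z) \<partial>?P) = (\<integral>\<^sup>+z. indicator (?\<Psi> -` A \<inter> space ?P) z \<partial>?P)"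
    by (rule nn_integral_cong) (simp add: indicator_def)
  also have "\<dots> = emeasure ?P (?\<Psi> -` A \<inter> space ?P)"
    using measurable_sets[OF \<Psi> A] by simp
  finally show ?thesis .
qed

lemma AE_PiM_components_notin_null:
  assumes M: "sigma_finite_measure M" and I: "finite I" and N: "N \<in> null_sets M"
  shows "AE z in PiM I (\<lambda>_. M). \<forall>j\<in>I. z j \<notin> N"
proof (rule AE_finite_allI[OF I])
  interpret product_sigma_finite "\<lambda>_. M"
    using M by (simp add: product_sigma_finite_def)
  fix j assume j: "j \<in> I"
  let ?N = "Pi\<^sub>E I (\<lambda>i. if i = j then N else space M)"
  have "emeasure (PiM I (\<lambda>_. M)) ?N = (\<Prod>i\<in>I. emeasure M (if i = j then N else space M))"
    using N by (intro emeasure_PiM[OF I]) auto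
  also have "\<dots> = 0"
    using I j N by (intro prod_zero) auto
  finally have "emeasure (PiM I (\<lambda>_. M)) ?N = 0" .
  moreover have "?N \<in> sets (PiM I (\<lambda>_. M))"
    using N by (intro sets_PiM_I_finite[OF I]) auto
  ultimately have "?N \<in> null_sets (PiM I (\<lambda>_. M))"
    by blast
  then show "AE z in PiM I (\<lambda>_. M). z j \<notin> N"
    by (rule AE_I') (auto simp: space_PiM PiE_iff extensional_def)
qed

lemma emeasure_PiM_nonneg_le_scaled:
  fixes G :: "real measure" and I :: "'i set" and c :: "'i \<Rightarrow> real"
  defines "P \<equiv> PiM I (\<lambda>_. G)"
  assumes G: "sets G = sets borel" "sigma_finite_measure G" "emeasure G {..<0} = 0"
    and I: "finite I"
    and \<psi>: "\<And>i. i \<in> I \<Longrightarrow> \<psi> i \<in> borel_measurable borel"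
    and c: "\<And>i. i \<in> I \<Longrightarrow> 0 \<le> c i"
    and le: "\<And>i B. i \<in> I \<Longrightarrow> B \<in> sets borel \<Longrightarrow> emeasure G B \<le> ennreal (c i) * emeasure G (\<psi> i -` B)"
    and A: "A \<in> sets P" "A' \<in> sets P"
    and vimage: "\<And>z. z \<in> space P \<Longrightarrow> \<forall>j\<in>I. 0 \<le> \<psi> j (z j) \<Longrightarrow> (\<lambda>j\<in>I. \<psi> j (z j)) \<in> A \<Longrightarrow> z \<in> A'"
  shows "emeasure P A \<le> ennreal (\<Prod>i\<in>I. c i) * emeasure P A'"
proof -
  define Nonneg where "Nonneg = {z \<in> space P. \<forall>j\<in>I. 0 \<le> z j}"
  have "(\<lambda>z. z j) \<in> borel_measurable P" if "j \<in> I" for j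
    using measurable_component_singleton[OF that, of "\<lambda>_. G"]
    unfolding P_def measurable_cong_sets[OF refl G(1)] .
  then have sets_Nonneg: "Nonneg \<in> sets P"
    unfolding Nonneg_def using I by (intro sets.sets_Collect_finite_All) auto
  have "emeasure P A = emeasure P (A \<inter> Nonneg)"
  proof (rule emeasure_eq_AE)
    have "AE z in P. \<forall>j\<in>I. z j \<notin> {..<0}"
      unfolding P_def using G I by (intro AE_PiM_components_notin_null) auto
    then show "AE z in P. (z \<in> A) = (z \<in> A \<inter> Nonneg)"
      by eventually_elim (auto simp: Nonneg_def not_less dest: subsetD[OF sets.sets_into_space[OF A(1)]])
  qed (use A sets_Nonneg in auto)
  also have "\<dots> \<le> ennreal (\<Prod>i\<in>I. c i) * emeasure P ((\<lambda>z. \<lambda>j\<in>I. \<psi> j (z j)) -` (A \<inter> Nonneg) \<inter> space P)"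
    unfolding P_def using G I A sets_Nonneg \<psi> c le sets_eq_imp_space_eq[OF G(1)]
    by (intro emeasure_PiM_le_scaled_vimage) (auto simp: P_def measurable_cong_sets[OF G(1) G(1)])
  also have "\<dots> \<le> ennreal (\<Prod>i\<in>I. c i) * emeasure P A'"
    using vimage A by (intro mult_left_mono emeasure_mono) (auto simp: Nonneg_def)
  finally show ?thesis .
qed

lemma finite_measure_PiM:
  assumes "finite I" "finite_measure M"
  shows "finite_measure (PiM I (\<lambda>_. M))"
proof (rule finite_measureI)
  interpret product_sigma_finite "\<lambda>_. M"
    using assms(2) by (simp add: product_sigma_finite_def finite_measure.axioms(1))
  have "emeasure (PiM I (\<lambda>_. M)) (space (PiM I (\<lambda>_. M))) = (\<Prod>i\<in>I. emeasure M (space M))"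
    using emeasure_PiM[OF assms(1), of "\<lambda>_. space M"] by (simp add: space_PiM)
  then show "emeasure (PiM I (\<lambda>_. M)) (space (PiM I (\<lambda>_. M))) \<noteq> \<infinity>"
    using finite_measure.emeasure_finite[OF assms(2)] by (simp add: power_eq_top_ennreal)
qed

lemma measure_distr_le_if_fibres_le:
  fixes P :: "'a measure" and f g :: "'a \<Rightarrow> 'b"
  assumes P: "finite_measure P" and R: "finite R" and C: "0 \<le> C"
    and f: "f \<in> P \<rightarrow>\<^sub>M count_space UNIV" and g: "g \<in> P \<rightarrow>\<^sub>M count_space UNIV"
    and f_range: "\<And>z. z \<in> space P \<Longrightarrow> f z \<in> R"
    and le: "\<And>r. r \<in> R \<Longrightarrow> emeasure P (f -` {r} \<inter> space P) \<le> ennreal C * emeasure P (g -` {r} \<inter> space P)"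
  shows "measure (distr P (count_space UNIV) f) T \<le> C * measure (distr P (count_space UNIV) g) T"
proof -
  interpret finite_measure P by (rule P)
  have fibres: "(\<lambda>r. h -` {r} \<inter> space P) ` (T \<inter> R) \<subseteq> sets P"
    if "h \<in> P \<rightarrow>\<^sub>M count_space UNIV" for h :: "'a \<Rightarrow> 'b"
    using measurable_sets[OF that] by auto
  have "emeasure P (f -` T \<inter> space P) = emeasure P (\<Union>r\<in>T \<inter> R. f -` {r} \<inter> space P)"
    using f_range by (intro arg_cong[where f = "emeasure P"]) auto
  also have "\<dots> = (\<Sum>r\<in>T \<inter> R. emeasure P (f -` {r} \<inter> space P))"
    using R fibres[OF f] by (intro sum_emeasure[symmetric]) (auto simp: disjoint_family_on_def)
  also have "\<dots> \<le> (\<Sum>r\<in>T \<inter> R. ennreal C * emeasure P (g -` {r} \<inter> space P))"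
    by (intro sum_mono le) auto
  also have "\<dots> = ennreal C * (\<Sum>r\<in>T \<inter> R. emeasure P (g -` {r} \<inter> space P))"
    by (simp add: sum_distrib_left)
  also have "\<dots> \<le> ennreal C * emeasure P (g -` T \<inter> space P)"
  proof (rule mult_left_mono)
    have "(\<Sum>r\<in>T \<inter> R. emeasure P (g -` {r} \<inter> space P)) = emeasure P (\<Union>r\<in>T \<inter> R. g -` {r} \<inter> space P)"
      using R fibres[OF g] by (intro sum_emeasure) (auto simp: disjoint_family_on_def)
    also have "\<dots> \<le> emeasure P (g -` T \<inter> space P)"
      using measurable_sets[OF g] by (intro emeasure_mono) auto
    finally show "(\<Sum>r\<in>T \<inter> R. emeasure P (g -` {r} \<inter> space P)) \<le> emeasure P (g -` T \<inter> space P)" .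
  qed simp
  finally have "measure P (f -` T \<inter> space P) \<le> C * measure P (g -` T \<inter> space P)"
    using C by (simp add: emeasure_eq_measure ennreal_mult[symmetric] ennreal_le_iff)
  then show ?thesis
    using f g by (simp add: measure_distr)
qed

lemma argmax_first_in_set:
  assumes "rs \<noteq> []"
  shows "argmax_first rs f \<in> set rs"
    and "f (argmax_first rs f) = Max (f ` set rs)"
proof -
  have "Max (f ` set rs) \<in> f ` set rs"
    using assms by (intro Max_in) auto
  then have "filter (\<lambda>r. f r = Max (f ` set rs)) rs \<noteq> []"
    by (auto simp: filter_empty_conv)
  then have "argmax_first rs f \<in> set (filter (\<lambda>r. f r = Max (f ` set rs)) rs)"
    unfolding argmax_first_def by (rule hd_in_set)
  then show "argmax_first rs f \<in> set rs" and "f (argmax_first rs f) = Max (f ` set rs)"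
    by auto
qed

lemma hd_filter_eq_if_stronger:
  assumes "hd (filter P xs) = r" "P r" "Q r" "\<And>x. x \<in> set xs \<Longrightarrow> Q x \<Longrightarrow> P x"
  shows "hd (filter Q xs) = r"
  using assms by (induction xs) auto

lemma argmax_first_eq_if_margins_grow:
  assumes ne: "rs \<noteq> []" and r: "argmax_first rs f = r"
    and margin: "\<And>q. q \<in> set rs \<Longrightarrow> f r - f q \<le> g r - g q"
  shows "argmax_first rs g = r"
proof -
  have r_in: "r \<in> set rs" and fr: "f r = Max (f ` set rs)"
    using argmax_first_in_set[OF ne, of f] r by auto
  have f_le: "f q \<le> f r" if "q \<in> set rs" for q
    using fr that by simp
  have g_le: "g q \<le> g r" if "q \<in> set rs" for q
    using margin[OF that] f_le[OF that] by linarith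
  have gr: "g r = Max (g ` set rs)"
    using r_in g_le by (intro Max_eqI[symmetric]) auto
  show ?thesis
    unfolding argmax_first_def
  proof (rule hd_filter_eq_if_stronger[where P = "\<lambda>q. f q = Max (f ` set rs)"])
    show "hd (filter (\<lambda>q. f q = Max (f ` set rs)) rs) = r"
      using r by (simp add: argmax_first_def)
    fix q assume "q \<in> set rs" "g q = Max (g ` set rs)"
    then show "f q = Max (f ` set rs)"
      using margin[of q] f_le[of q] fr gr by linarith
  qed (use fr gr in auto)
qed

lemma sets_Collect_hd_filter:
  assumes "\<And>r. r \<in> set xs \<Longrightarrow> {z \<in> space M. P r z} \<in> sets M"
  shows "{z \<in> space M. hd (filter (\<lambda>r. P r z) xs) \<in> A} \<in> sets M"
  using assms
proof (induction xs)
  case Nil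
  then show ?case by (cases "hd [] \<in> A") auto
next
  case (Cons a xs)
  have "{z \<in> space M. hd (filter (\<lambda>r. P r z) (a # xs)) \<in> A} =
      {z \<in> space M. (P a z \<and> a \<in> A) \<or> (\<not> P a z \<and> hd (filter (\<lambda>r. P r z) xs) \<in> A)}"
    by auto
  then show ?case
    using Cons by simp
qed

lemma measurable_argmax_first:
  fixes F :: "'a \<Rightarrow> 'r \<Rightarrow> real"
  assumes "\<And>r. r \<in> set rs \<Longrightarrow> (\<lambda>z. F z r) \<in> borel_measurable M"
  shows "(\<lambda>z. argmax_first rs (F z)) \<in> M \<rightarrow>\<^sub>M count_space UNIV"
proof (rule measurableI)
  fix A :: "'r set"
  have "(\<lambda>z. argmax_first rs (F z)) -` A \<inter> space M =
      {z \<in> space M. hd (filter (\<lambda>r. F z r = Max ((\<lambda>i. F z i) ` set rs)) rs) \<in> A}"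
    by (auto simp: argmax_first_def)
  also have "\<dots> \<in> sets M"
    using assms by (intro sets_Collect_hd_filter borel_measurable_eq borel_measurable_Max) auto
  finally show "(\<lambda>z. argmax_first rs (F z)) -` A \<inter> space M \<in> sets M" .
qed simp

lemma argmax_first_noisy_transfer:
  fixes ux uy w z :: "'r \<Rightarrow> real"
  assumes ne: "rs \<noteq> []" and r: "argmax_first rs (\<lambda>q. ux q + sx * w q) = r"
    and u: "\<And>q. q \<in> set rs \<Longrightarrow> \<bar>ux q - uy q\<bar> \<le> D"
    and s1: "sx * \<rho>_r \<le> sy" and s2: "sy \<le> sx * \<rho>_q" and D: "2 * D \<le> sx * \<rho>_r * \<delta>"
    and \<delta>: "0 \<le> \<delta>" "\<delta> \<le> z r" and wr: "w r = \<rho>_r * (z r - \<delta>)"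
    and wq: "\<And>q. q \<in> set rs \<Longrightarrow> q \<noteq> r \<Longrightarrow> w q = \<rho>_q * z q \<and> 0 \<le> z q"
  shows "argmax_first rs (\<lambda>q. uy q + sy * z q) = r"
proof (rule argmax_first_eq_if_margins_grow[OF ne r])
  have r_in: "r \<in> set rs"
    using argmax_first_in_set(1)[OF ne, of "\<lambda>q. ux q + sx * w q"] r by simp
  fix q assume q: "q \<in> set rs"
  show "ux r + sx * w r - (ux q + sx * w q) \<le> uy r + sy * z r - (uy q + sy * z q)"
  proof (cases "q = r")
    case False
    have "(sx * \<rho>_r) * z r \<le> sy * z r"
      using s1 \<delta> by (intro mult_right_mono) auto
    moreover have "sy * z q \<le> (sx * \<rho>_q) * z q"
      using s2 wq[OF q False] by (intro mult_right_mono) auto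
    moreover have "sx * w r = sx * \<rho>_r * z r - sx * \<rho>_r * \<delta>" "sx * w q = sx * \<rho>_q * z q"
      by (simp_all add: wr wq[OF q False] algebra_simps)
    ultimately show ?thesis
      using u[OF q] u[OF r_in] D by linarith
  qed simp
qed

lemma emeasure_argmax_first_noisy_le:
  fixes G :: "real measure" and rs :: "'r list" and ux uy :: "'r \<Rightarrow> real"
  defines "P \<equiv> PiM (set rs) (\<lambda>_. G)"
  assumes G: "sets G = sets borel" "sigma_finite_measure G" "emeasure G {..<0} = 0"
    and ne: "rs \<noteq> []" and r: "r \<in> set rs"
    and u: "\<And>q. q \<in> set rs \<Longrightarrow> \<bar>ux q - uy q\<bar> \<le> D"
    and s1: "sx * \<rho>_r \<le> sy" and s2: "sy \<le> sx * \<rho>_q" and D: "2 * D \<le> sx * \<rho>_r * \<delta>"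
    and \<delta>: "0 \<le> \<delta>" and \<rho>: "0 < \<rho>_r" "0 < \<rho>_q" and c: "0 \<le> c_r" "0 \<le> c_q"
    and shift: "\<And>B. B \<in> sets borel \<Longrightarrow> emeasure G B \<le> ennreal c_r * emeasure G ((\<lambda>s. \<rho>_r * (s - \<delta>)) -` B)"
    and dilate: "\<And>B. B \<in> sets borel \<Longrightarrow> emeasure G B \<le> ennreal c_q * emeasure G ((\<lambda>s. \<rho>_q * s) -` B)"
  shows "emeasure P {w \<in> space P. argmax_first rs (\<lambda>q. ux q + sx * w q) = r}
           \<le> ennreal (c_r * c_q ^ (card (set rs) - 1)) *
             emeasure P {z \<in> space P. argmax_first rs (\<lambda>q. uy q + sy * z q) = r}"
proof -
  define \<psi> where "\<psi> i s = (if i = r then \<rho>_r * (s - \<delta>) else \<rho>_q * s)" for i s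
  define c where "c i = (if i = r then c_r else c_q)" for i
  have sets_event: "{w \<in> space P. argmax_first rs (\<lambda>q. f q + s * w q) = r} \<in> sets P"
    for f :: "'r \<Rightarrow> real" and s
  proof -
    have [measurable]: "(\<lambda>z. z j) \<in> borel_measurable P" if "j \<in> set rs" for j
      using measurable_component_singleton[OF that, of "\<lambda>_. G"]
      unfolding P_def measurable_cong_sets[OF refl G(1)] .
    have "{w \<in> space P. argmax_first rs (\<lambda>q. f q + s * w q) = r}
        = (\<lambda>w. argmax_first rs (\<lambda>q. f q + s * w q)) -` {r} \<inter> space P"
      by auto
    also have "\<dots> \<in> sets P"
      by (intro measurable_sets[OF measurable_argmax_first]) auto
    finally show ?thesis .
  qed
  have "emeasure P {w \<in> space P. argmax_first rs (\<lambda>q. ux q + sx * w q) = r}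
      \<le> ennreal (\<Prod>i\<in>set rs. c i) * emeasure P {z \<in> space P. argmax_first rs (\<lambda>q. uy q + sy * z q) = r}"
    unfolding P_def
  proof (rule emeasure_PiM_nonneg_le_scaled[OF G])
    fix z assume nonneg: "\<forall>j\<in>set rs. 0 \<le> \<psi> j (z j)"
      and "(\<lambda>j\<in>set rs. \<psi> j (z j)) \<in> {w \<in> space (PiM (set rs) (\<lambda>_. G)). argmax_first rs (\<lambda>q. ux q + sx * w q) = r}"
      and z: "z \<in> space (PiM (set rs) (\<lambda>_. G))"
    then have x: "argmax_first rs (\<lambda>q. ux q + sx * (\<lambda>j\<in>set rs. \<psi> j (z j)) q) = r"
      by simp
    have "argmax_first rs (\<lambda>q. uy q + sy * z q) = r"
    proof (rule argmax_first_noisy_transfer[OF ne x u s1 s2 D \<delta>])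
      show "\<delta> \<le> z r" "(\<lambda>j\<in>set rs. \<psi> j (z j)) r = \<rho>_r * (z r - \<delta>)"
        using nonneg r \<rho> by (auto simp: \<psi>_def zero_le_mult_iff)
      show "(\<lambda>j\<in>set rs. \<psi> j (z j)) q = \<rho>_q * z q \<and> 0 \<le> z q" if "q \<in> set rs" "q \<noteq> r" for q
        using nonneg that \<rho> by (auto simp: \<psi>_def zero_le_mult_iff)
    qed auto
    then show "z \<in> {z \<in> space (PiM (set rs) (\<lambda>_. G)). argmax_first rs (\<lambda>q. uy q + sy * z q) = r}"
      using z by simp
  qed (use c shift dilate sets_event in \<open>auto simp: P_def \<psi>_def c_def\<close>)
  also have "(\<Prod>i\<in>set rs. c i) = c_r * c_q ^ (card (set rs) - 1)"
    using r by (simp add: prod.remove[of "set rs" r] c_def card_Diff_singleton)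
  finally show ?thesis .
qed

lemma prob_space_density_prob_density:
  assumes "prob_density h"
  shows "prob_space (density lborel h)"
  using assms by (intro prob_spaceI) (simp add: prob_density_def emeasure_density_const emeasure_density)

lemma emeasure_density_one_sided:
  assumes pd: "prob_density h" and B: "B \<in> sets borel"
  shows "emeasure (density lborel (one_sided h)) B =
    ennreal (inverse (\<integral>w. indicator {0..} w * h w \<partial>lborel)) * emeasure (density lborel h) (B \<inter> {0..})"
proof -
  define K where "K = (\<integral>w. indicator {0..} w * h w \<partial>lborel)"
  have [measurable]: "h \<in> borel_measurable borel" and h_nonneg: "\<And>z. 0 \<le> h z"
    using pd by (auto simp: prob_density_def)
  have "0 \<le> K"
    unfolding K_def by (intro integral_nonneg_AE AE_I2) (simp add: h_nonneg)
  then have "ennreal (one_sided h z) * indicator B z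
      = ennreal (inverse K) * (ennreal (h z) * indicator (B \<inter> {0..}) z)" for z
    using h_nonneg[of z]
    by (cases "z < 0") (auto simp: one_sided_def K_def indicator_def ennreal_mult[symmetric] field_simps)
  moreover have "one_sided h \<in> borel_measurable borel"
    unfolding one_sided_def by measurable
  ultimately have "emeasure (density lborel (one_sided h)) B
      = (\<integral>\<^sup>+z. ennreal (inverse K) * (ennreal (h z) * indicator (B \<inter> {0..}) z) \<partial>lborel)"
    using B by (simp add: emeasure_density)
  also have "\<dots> = ennreal (inverse K) * emeasure (density lborel h) (B \<inter> {0..})"
    using B by (simp add: nn_integral_cmult emeasure_density)
  finally show ?thesis
    unfolding K_def .
qed

lemma emeasure_one_sided_le_vimage:
  assumes pd: "prob_density h" and \<phi>: "\<phi> \<in> borel_measurable borel"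
    and le: "\<And>A. A \<in> sets borel \<Longrightarrow>
               emeasure (density lborel h) A \<le> ennreal c * emeasure (density lborel h) (\<phi> -` A)"
    and nonneg: "\<And>s. 0 \<le> \<phi> s \<Longrightarrow> 0 \<le> s"
    and B: "B \<in> sets borel"
  shows "emeasure (density lborel (one_sided h)) B
           \<le> ennreal c * emeasure (density lborel (one_sided h)) (\<phi> -` B)"
proof -
  let ?H = "density lborel h" and ?iK = "ennreal (inverse (\<integral>w. indicator {0..} w * h w \<partial>lborel))"
  have vimage_B: "\<phi> -` B \<in> sets borel"
    using measurable_sets[OF \<phi> B] by simp
  have "emeasure ?H (B \<inter> {0..}) \<le> ennreal c * emeasure ?H (\<phi> -` (B \<inter> {0..}))"
    using B by (intro le) auto
  also have "\<dots> \<le> ennreal c * emeasure ?H (\<phi> -` B \<inter> {0..})"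
    using nonneg vimage_B by (intro mult_left_mono emeasure_mono) auto
  finally have "?iK * emeasure ?H (B \<inter> {0..}) \<le> ?iK * (ennreal c * emeasure ?H (\<phi> -` B \<inter> {0..}))"
    by (rule mult_left_mono) simp
  then show ?thesis
    using B vimage_B by (simp add: emeasure_density_one_sided[OF pd] mult.left_commute)
qed

lemma admissible_shift:
  assumes adm: "admissible \<alpha> \<beta> h" and pd: "prob_density h"
    and e: "0 < e" "\<bar>\<Delta>\<bar> \<le> \<alpha> e" "0 \<le> \<beta> e" and A: "A \<in> sets borel"
  shows "emeasure (density lborel h) A \<le> ennreal (exp (e/2)) * emeasure (density lborel h) ((\<lambda>s. s - \<Delta>) -` A)"
proof -
  interpret prob_space "density lborel h"
    using pd by (rule prob_space_density_prob_density)
  have "(\<lambda>s. s + \<Delta>) ` A = (\<lambda>s. s - \<Delta>) -` A"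
    by (force simp: image_iff)
  then have "measure (density lborel h) A \<le> exp (e/2) * measure (density lborel h) ((\<lambda>s. s - \<Delta>) -` A)"
    using adm e A unfolding admissible_def by (metis abs_zero)
  then show ?thesis
    by (simp add: emeasure_eq_measure ennreal_mult[symmetric] ennreal_leI)
qed

lemma admissible_dilation:
  assumes adm: "admissible \<alpha> \<beta> h" and pd: "prob_density h"
    and e: "0 < e" "0 \<le> \<alpha> e" and \<rho>: "0 < \<rho>" "\<bar>ln \<rho>\<bar> \<le> \<beta> e" and A: "A \<in> sets borel"
  shows "emeasure (density lborel h) A \<le> ennreal (exp (e/2)) * emeasure (density lborel h) ((\<lambda>s. \<rho> * s) -` A)"
proof -
  interpret prob_space "density lborel h"
    using pd by (rule prob_space_density_prob_density)
  have "(\<lambda>s. exp (- ln \<rho>) * s) ` A = (\<lambda>s. \<rho> * s) -` A"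
    using \<rho> by (force simp: image_iff exp_minus field_simps)
  moreover have "\<bar>- ln \<rho>\<bar> \<le> \<beta> e"
    using \<rho> by simp
  ultimately have "measure (density lborel h) A \<le> exp (e/2) * measure (density lborel h) ((\<lambda>s. \<rho> * s) -` A)"
    using adm e A unfolding admissible_def by (metis abs_zero)
  then show ?thesis
    by (simp add: emeasure_eq_measure ennreal_mult[symmetric] ennreal_leI)
qed

lemma one_sided_shift:
  assumes adm: "admissible \<alpha> \<beta> h" and pd: "prob_density h"
    and e: "0 < e" "0 \<le> \<Delta>" "\<Delta> \<le> \<alpha> e" "0 \<le> \<beta> e" and B: "B \<in> sets borel"
  shows "emeasure (density lborel (one_sided h)) B
           \<le> ennreal (exp (e/2)) * emeasure (density lborel (one_sided h)) ((\<lambda>s. s - \<Delta>) -` B)"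
  using e by (intro emeasure_one_sided_le_vimage[OF pd _ _ _ B] admissible_shift[OF adm pd]) auto

lemma one_sided_dilation:
  assumes adm: "admissible \<alpha> \<beta> h" and pd: "prob_density h"
    and e: "0 < e" "0 \<le> \<alpha> e" and \<rho>: "0 < \<rho>" "\<bar>ln \<rho>\<bar> \<le> \<beta> e" and B: "B \<in> sets borel"
  shows "emeasure (density lborel (one_sided h)) B
           \<le> ennreal (exp (e/2)) * emeasure (density lborel (one_sided h)) ((\<lambda>s. \<rho> * s) -` B)"
  using \<rho> by (intro emeasure_one_sided_le_vimage[OF pd _ _ _ B] admissible_dilation[OF adm pd e])
    (auto simp: zero_le_mult_iff)

lemma neighboring_sym:
  assumes "neighboring n x y"
  shows "neighboring n y x"
proof -
  have "{i. i < length y \<and> y ! i \<noteq> x ! i} = {i. i < length x \<and> x ! i \<noteq> y ! i}"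
    using assms by (auto simp: neighboring_def)
  then have "hamming y x = hamming x y"
    by (simp add: hamming_def)
  then show ?thesis
    using assms by (simp add: neighboring_def)
qed

lemma Max_image_le_scaled:
  fixes f g :: "'a \<Rightarrow> real"
  assumes "finite A" "A \<noteq> {}" "0 \<le> c" "\<And>x. x \<in> A \<Longrightarrow> f x \<le> c * g x"
  shows "Max (f ` A) \<le> c * Max (g ` A)"
proof (rule Max.boundedI)
  fix v assume "v \<in> f ` A"
  then obtain x where x: "x \<in> A" "v = f x" by auto
  have "f x \<le> c * g x" using assms(4)[OF x(1)] .
  also have "\<dots> \<le> c * Max (g ` A)"
    by (rule mult_left_mono) (use assms x in auto)
  finally show "v \<le> c * Max (g ` A)" using x by simp
qed (use assms in auto)

lemma abs_ln_div_le:
  fixes a b t :: real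
  assumes "0 < a" "0 < b" "a \<le> exp t * b" "b \<le> exp t * a"
  shows "\<bar>ln (b / a)\<bar> \<le> t"
proof -
  have "ln a \<le> ln (exp t * b)"
    using assms by (subst ln_le_cancel_iff) auto
  moreover have "ln b \<le> ln (exp t * a)"
    using assms by (subst ln_le_cancel_iff) auto
  ultimately have "ln a \<le> t + ln b" "ln b \<le> t + ln a"
    using assms by (simp_all add: ln_mult)
  then show ?thesis
    using assms by (simp add: ln_div)
qed

locale sps_setting =
  fixes h :: "real \<Rightarrow> real" and \<alpha> \<beta> :: "real \<Rightarrow> real" and n :: nat and rs :: "'r list"
    and u S :: "'d list \<Rightarrow> 'r \<Rightarrow> real" and \<epsilon> k l :: real
  assumes h_density: "prob_density h"
    and \<alpha>_pos: "\<And>e. 0 < e \<Longrightarrow> 0 < \<alpha> e" and \<beta>_pos: "\<And>e. 0 < e \<Longrightarrow> 0 < \<beta> e"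
    and h_admissible: "admissible \<alpha> \<beta> h"
    and \<epsilon>_pos: "0 < \<epsilon>" and k_pos: "0 < k" and l_pos: "0 < l"
    and rs_nonempty: "rs \<noteq> []" and rs_distinct: "distinct rs"
    and S_pos: "\<And>x r. length x = n \<Longrightarrow> r \<in> set rs \<Longrightarrow> 0 < S x r"
    and S_smooth: "smooth_upper_bound n (set rs) u S (\<beta> (l * \<epsilon>))"
begin

abbreviation "noise \<equiv> density lborel (one_sided h)"
abbreviation "noise_vector \<equiv> PiM (set rs) (\<lambda>_. noise)"
abbreviation "noise_scale \<equiv> \<alpha> (k * \<epsilon>)"
abbreviation "privacy_loss \<equiv> (k + (real (length rs) - 1) / 2 * l) * \<epsilon>"
abbreviation "S_max x \<equiv> Max (S x ` set rs)"

lemma noise_scale_pos: "0 < noise_scale"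
  using \<alpha>_pos k_pos \<epsilon>_pos by simp

lemma finite_measure_noise: "finite_measure noise"
proof (rule finite_measureI)
  interpret prob_space "density lborel h"
    using h_density by (rule prob_space_density_prob_density)
  show "emeasure noise (space noise) \<noteq> \<infinity>"
    using h_density by (simp add: emeasure_density_one_sided ennreal_mult_eq_top_iff)
qed

lemma emeasure_noise_negative: "emeasure noise {..<0} = 0"
proof -
  have "{..<0::real} \<inter> {0..} = {}" by auto
  then show ?thesis
    using h_density by (simp add: emeasure_density_one_sided)
qed

lemma noise_double_shift:
  assumes "B \<in> sets borel"
  shows "emeasure noise B \<le> ennreal (exp (k * \<epsilon>)) * emeasure noise ((\<lambda>s. s - 2 * noise_scale) -` B)"
proof -
  have e: "0 < k * \<epsilon>" "0 \<le> noise_scale" "0 \<le> \<beta> (k * \<epsilon>)"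
    using k_pos \<epsilon>_pos noise_scale_pos \<beta>_pos[of "k * \<epsilon>"] by auto
  have "emeasure noise B \<le> ennreal (exp (k * \<epsilon> / 2)) * emeasure noise ((\<lambda>s. s - noise_scale) -` B)"
    using e assms by (intro one_sided_shift[OF h_admissible h_density]) auto
  also have "\<dots> \<le> ennreal (exp (k * \<epsilon> / 2)) *
      (ennreal (exp (k * \<epsilon> / 2)) * emeasure noise ((\<lambda>s. s - noise_scale) -` (\<lambda>s. s - noise_scale) -` B))"
    using e measurable_sets[OF _ assms, of "\<lambda>s. s - noise_scale" borel]
    by (intro mult_left_mono one_sided_shift[OF h_admissible h_density]) auto
  also have "\<dots> = ennreal (exp (k * \<epsilon>)) * emeasure noise ((\<lambda>s. s - 2 * noise_scale) -` B)"
    by (simp add: vimage_def mult.assoc[symmetric] ennreal_mult[symmetric] exp_add[symmetric] algebra_simps)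
  finally show ?thesis .
qed

lemma noise_dilation:
  assumes "B \<in> sets borel" "0 < \<rho>" "\<bar>ln \<rho>\<bar> \<le> \<beta> (l * \<epsilon>)"
  shows "emeasure noise B \<le> ennreal (exp (l * \<epsilon> / 2)) * emeasure noise ((\<lambda>s. \<rho> * s) -` B)"
  using assms l_pos \<epsilon>_pos \<alpha>_pos[of "l * \<epsilon>"]
  by (intro one_sided_dilation[OF h_admissible h_density]) auto

lemma S_max_pos:
  assumes "length x = n"
  shows "0 < S_max x"
proof -
  obtain r where r: "r \<in> set rs"
    using rs_nonempty by (cases rs) auto
  then have "S x r \<le> S_max x"
    by simp
  then show ?thesis
    using S_pos[OF assms r] by linarith
qed

lemma S_max_smooth:
  assumes "neighboring n x y"
  shows "S_max x \<le> exp (\<beta> (l * \<epsilon>)) * S_max y"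
  using S_smooth assms rs_nonempty
  by (intro Max_image_le_scaled) (auto simp: smooth_upper_bound_def)

lemma u_diff_le_S_max:
  assumes "neighboring n x y" "q \<in> set rs"
  shows "\<bar>u x q - u y q\<bar> \<le> min (S_max x) (S_max y)"
proof -
  have "\<bar>u x q - u y q\<bar> \<le> S x q" "\<bar>u y q - u x q\<bar> \<le> S y q"
    using S_smooth assms neighboring_sym[OF assms(1)] by (auto simp: smooth_upper_bound_def)
  moreover have "S x q \<le> S_max x" "S y q \<le> S_max y"
    using assms(2) by simp_all
  ultimately show ?thesis
    by linarith
qed

lemma abs_ln_S_max_ratio:
  assumes "neighboring n x y"
  shows "\<bar>ln (S_max y / S_max x)\<bar> \<le> \<beta> (l * \<epsilon>)"
  using assms S_max_pos abs_ln_div_le S_max_smooth[OF assms] S_max_smooth[OF neighboring_sym[OF assms]]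
  by (auto simp: neighboring_def)

lemma sps_choice_event_le_if_S_max_le:
  assumes xy: "neighboring n x y" and r: "r \<in> set rs" and le: "S_max x \<le> S_max y"
  shows "emeasure noise_vector {z \<in> space noise_vector. sps_choice rs u S noise_scale x z = r}
           \<le> ennreal (exp (k * \<epsilon>) * exp (l * \<epsilon> / 2) ^ (length rs - 1)) *
             emeasure noise_vector {z \<in> space noise_vector. sps_choice rs u S noise_scale y z = r}"
proof -
  have pos: "0 < S_max x" "0 < S_max y"
    using xy S_max_pos by (auto simp: neighboring_def)
  have "emeasure noise_vector {z \<in> space noise_vector. sps_choice rs u S noise_scale x z = r}
      \<le> ennreal (exp (k * \<epsilon>) * exp (l * \<epsilon> / 2) ^ (card (set rs) - 1)) *
        emeasure noise_vector {z \<in> space noise_vector. sps_choice rs u S noise_scale y z = r}"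
    unfolding sps_choice_def
  proof (rule emeasure_argmax_first_noisy_le[where \<rho>_r = 1 and \<rho>_q = "S_max y / S_max x"
        and \<delta> = "2 * noise_scale" and D = "min (S_max x) (S_max y)",
        OF _ _ emeasure_noise_negative rs_nonempty r u_diff_le_S_max[OF xy]])
    show "emeasure noise B \<le> ennreal (exp (k * \<epsilon>)) * emeasure noise ((\<lambda>s. 1 * (s - 2 * noise_scale)) -` B)"
      if "B \<in> sets borel" for B
      using noise_double_shift[OF that] by simp
    show "emeasure noise B \<le> ennreal (exp (l * \<epsilon> / 2)) * emeasure noise ((\<lambda>s. S_max y / S_max x * s) -` B)"
      if "B \<in> sets borel" for B
      using noise_dilation[OF that _ abs_ln_S_max_ratio[OF xy]] pos by simp
  qed (use le pos noise_scale_pos finite_measure_noise in \<open>auto simp: field_simps finite_measure_def\<close>)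
  then show ?thesis
    using rs_distinct by (simp add: distinct_card)
qed

lemma sps_choice_event_le_if_S_max_gt:
  assumes xy: "neighboring n x y" and r: "r \<in> set rs" and gt: "S_max y < S_max x"
  shows "emeasure noise_vector {z \<in> space noise_vector. sps_choice rs u S noise_scale x z = r}
           \<le> ennreal (exp (k * \<epsilon>) * exp (l * \<epsilon> / 2)) *
             emeasure noise_vector {z \<in> space noise_vector. sps_choice rs u S noise_scale y z = r}"
proof -
  let ?\<rho> = "S_max y / S_max x"
  have pos: "0 < S_max x" "0 < S_max y"
    using xy S_max_pos by (auto simp: neighboring_def)
  have "emeasure noise_vector {z \<in> space noise_vector. sps_choice rs u S noise_scale x z = r}
      \<le> ennreal (exp (k * \<epsilon>) * exp (l * \<epsilon> / 2) * 1 ^ (card (set rs) - 1)) *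
        emeasure noise_vector {z \<in> space noise_vector. sps_choice rs u S noise_scale y z = r}"
    unfolding sps_choice_def
  proof (rule emeasure_argmax_first_noisy_le[where \<rho>_r = ?\<rho> and \<rho>_q = 1
        and \<delta> = "2 * noise_scale" and D = "min (S_max x) (S_max y)",
        OF _ _ emeasure_noise_negative rs_nonempty r u_diff_le_S_max[OF xy]])
    show "emeasure noise B \<le> ennreal (exp (k * \<epsilon>) * exp (l * \<epsilon> / 2)) *
        emeasure noise ((\<lambda>s. ?\<rho> * (s - 2 * noise_scale)) -` B)"
      if B: "B \<in> sets borel" for B
    proof -
      have "(\<lambda>s. ?\<rho> * s) -` B \<in> sets borel"
        using measurable_sets[of "\<lambda>s. ?\<rho> * s" borel borel B] B by simp
      then have "emeasure noise B \<le> ennreal (exp (l * \<epsilon> / 2)) *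
          (ennreal (exp (k * \<epsilon>)) * emeasure noise ((\<lambda>s. s - 2 * noise_scale) -` (\<lambda>s. ?\<rho> * s) -` B))"
        using noise_dilation[OF B _ abs_ln_S_max_ratio[OF xy]] noise_double_shift pos
        by (meson divide_pos_pos mult_left_mono order_trans zero_le)
      then show ?thesis
        by (simp add: vimage_def ennreal_mult mult_ac)
    qed
    show "emeasure noise B \<le> ennreal 1 * emeasure noise ((\<lambda>s. 1 * s) -` B)" for B
      by simp
  qed (use gt pos noise_scale_pos finite_measure_noise in \<open>auto simp: field_simps finite_measure_def\<close>)
  then show ?thesis
    by simp
qed

lemma sps_choice_event_le:
  assumes xy: "neighboring n x y" and r: "r \<in> set rs"
  shows "emeasure noise_vector {z \<in> space noise_vector. sps_choice rs u S noise_scale x z = r}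
           \<le> ennreal (exp privacy_loss) *
             emeasure noise_vector {z \<in> space noise_vector. sps_choice rs u S noise_scale y z = r}"
proof (cases "length rs = 1")
  case True
  then have "rs = [r]"
    using r by (cases rs) auto
  then have "sps_choice rs u S noise_scale x z = sps_choice rs u S noise_scale y z" for z
    by (simp add: sps_choice_def argmax_first_def)
  moreover have "1 \<le> ennreal (exp privacy_loss)"
    using True k_pos \<epsilon>_pos by simp
  ultimately show ?thesis
    using mult_right_mono[of 1 "ennreal (exp privacy_loss)"] by simp
next
  case False
  moreover have "length rs \<noteq> 0"
    using rs_nonempty by simp
  ultimately have m: "2 \<le> length rs"
    by linarith
  show ?thesis
  proof (cases "S_max x \<le> S_max y")
    case True
    have "exp (k * \<epsilon>) * exp (l * \<epsilon> / 2) ^ (length rs - 1) = exp privacy_loss"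
      using m by (simp add: exp_of_nat_mult[symmetric] exp_add[symmetric] of_nat_diff algebra_simps)
    then show ?thesis
      using sps_choice_event_le_if_S_max_le[OF xy r True] by simp
  next
    case False
    have "l * \<epsilon> / 2 \<le> (real (length rs) - 1) / 2 * l * \<epsilon>"
      using m l_pos \<epsilon>_pos by (simp add: field_simps)
    then have "exp (k * \<epsilon>) * exp (l * \<epsilon> / 2) \<le> exp privacy_loss"
      by (simp add: exp_add[symmetric] algebra_simps)
    then show ?thesis
      using sps_choice_event_le_if_S_max_gt[OF xy r] False
      by (meson ennreal_leI mult_right_mono not_le order_trans zero_le)
  qed
qed

lemma measurable_sps_choice:
  fixes x :: "'d list"
  shows "sps_choice rs u S noise_scale x \<in> noise_vector \<rightarrow>\<^sub>M count_space UNIV"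
  unfolding sps_choice_def by (intro measurable_argmax_first) measurable

theorem sps_mechanism_differentially_private:
  "differentially_private n (sps_mechanism rs (one_sided h) u S noise_scale) privacy_loss"
  unfolding differentially_private_def sps_mechanism_def
proof (intro allI impI ballI)
  fix x y :: "'d list" and T assume xy: "neighboring n x y"
  show "measure (distr noise_vector (count_space UNIV) (sps_choice rs u S noise_scale x)) T
      \<le> exp privacy_loss * measure (distr noise_vector (count_space UNIV) (sps_choice rs u S noise_scale y)) T"
  proof (rule measure_distr_le_if_fibres_le[OF _ _ _ measurable_sps_choice measurable_sps_choice])
    show "finite_measure noise_vector"
      using finite_measure_noise by (intro finite_measure_PiM) auto
    show "sps_choice rs u S noise_scale x z \<in> set rs" for z
      unfolding sps_choice_def using rs_nonempty by (rule argmax_first_in_set)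
    show "emeasure noise_vector (sps_choice rs u S noise_scale x -` {r} \<inter> space noise_vector)
        \<le> ennreal (exp privacy_loss) * emeasure noise_vector (sps_choice rs u S noise_scale y -` {r} \<inter> space noise_vector)"
      if "r \<in> set rs" for r
      using sps_choice_event_le[OF xy that] by (simp add: vimage_def Int_def conj_commute)
  qed auto
qed

end

theorem theorem3:
  fixes h :: "real \<Rightarrow> real" and \<alpha> \<beta> :: "real \<Rightarrow> real"
    and n :: nat and rs :: "'r list"
    and u S :: "'d list \<Rightarrow> 'r \<Rightarrow> real"
    and \<epsilon> k l :: real
  assumes "prob_density h"
    and "\<forall>e>0. \<alpha> e > 0" and "\<forall>e>0. \<beta> e > 0"
    and "admissible \<alpha> \<beta> h"
    and "\<forall>z z'. 0 \<le> z \<and> z < z' \<longrightarrow> h z > h z' \<and> h z' > 0"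
    and "\<epsilon> > 0" and "k > 0" and "l > 0"
    and "rs \<noteq> []" and "distinct rs"
    and "\<forall>x r. length x = n \<and> r \<in> set rs \<longrightarrow> S x r > 0"
    and "smooth_upper_bound n (set rs) u S (\<beta> (l * \<epsilon>))"
  shows "differentially_private n
           (sps_mechanism rs (one_sided h) u S (\<alpha> (k * \<epsilon>)))
           ((k + (real (length rs) - 1) / 2 * l) * \<epsilon>)"
proof -
  interpret sps_setting h \<alpha> \<beta> n rs u S \<epsilon> k l
    using assms by unfold_locales auto
  show ?thesis
    by (rule sps_mechanism_differentially_private)
qed

end
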